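(* Over a finite field $\mathbb{F}_q$, let $N_{\mathbb{E}_6}$ and $N_{\mathbb{E}_8}$ be the numbers of $\mathbb{F}_q$-points of $X_{\mathbb{E}_6}(1,\dots,1)$ and $X_{\mathbb{E}_8}(1,\dots,1)$, and for $\alpha\in\mathbb{F}_q^*$ let $N_{\mathbb{E}_7}(\alpha)$ be the number of $\mathbb{F}_q$-points of $X_{\mathbb{E}_7}(1,\dots,1,\alpha)$, where $\alpha$ is the value on the leaf of the long branch of $\mathbb{E}_7$ and all other values are $1$. Then $N_{\mathbb{E}_6}=q^6+q^4+q^3+q^2+1$; $N_{\mathbb{E}_7}(\alpha)=q^7+q^5-q^2-1$ if $\alpha\neq-1$; $N_{\mathbb{E}_7}(-1)=q^7+2q^5+q^3-q^2-1$; and $N_{\mathbb{E}_8}=q^8+q^6+q^5+q^4+q^3+q^2+1$.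
   Context: For a finite tree $T$ and a family $\boldsymbol{\alpha}=(\alpha_t)_{t\in T}$ of invertible elements of a field, $X_T(\boldsymbol{\alpha})$ is the affine variety with coordinates $x_t,x'_t$ ($t\in T$) defined by $x_tx'_t=1+\alpha_t\prod_{s-t}x_s$, the product over the neighbors $s$ of $t$. For $m=6,7,8$, $\mathbb{E}_m$ is the tree with a central vertex from which three branches (paths) emanate, containing $1$, $2$ and $m-4$ further vertices respectively; the long branch is the one with $m-4$ vertices. *)

theory Defs
  imports "HOL-Library.FuncSet"
begin

text \<open>A finite tree is given by a finite vertex set V and a symmetric adjacency
  relation adj.\<close>

definition tree_var_points ::
  "nat set \<Rightarrow> (nat \<Rightarrow> nat \<Rightarrow> bool) \<Rightarrow> (nat \<Rightarrow> 'a::field)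
     \<Rightarrow> ((nat \<Rightarrow> 'a) \<times> (nat \<Rightarrow> 'a)) set" where
  "tree_var_points V adj \<alpha> =
     {(x, x'). x \<in> V \<rightarrow>\<^sub>E UNIV \<and> x' \<in> V \<rightarrow>\<^sub>E UNIV \<and>
        (\<forall>t\<in>V. x t * x' t = 1 + \<alpha> t * (\<Prod>s\<in>{s\<in>V. adj s t}. x s))}"

text \<open>The tree E_m on vertices 0..m-1: centre 0; short branch {1};
  branch of length two 0-2-3; long branch 0-4-5-...-(m-1), whose leaf is m-1.\<close>

definition E_edges :: "nat \<Rightarrow> (nat \<times> nat) set" where
  "E_edges m = {(0,1),(0,2),(2,3),(0,4)} \<union> {(i, i+1) | i. 4 \<le> i \<and> i + 1 < m}"

definition E_adj :: "nat \<Rightarrow> nat \<Rightarrow> nat \<Rightarrow> bool" where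
  "E_adj m s t \<longleftrightarrow> (s, t) \<in> E_edges m \<or> (t, s) \<in> E_edges m"

definition E_points :: "nat \<Rightarrow> (nat \<Rightarrow> 'a::field) \<Rightarrow> ((nat \<Rightarrow> 'a) \<times> (nat \<Rightarrow> 'a)) set" where
  "E_points m \<alpha> = tree_var_points {0..<m} (E_adj m) \<alpha>"

end

theory Submission
  imports Defs "HOL-Library.Cardinality"
begin

text \<open>For fixed x the equations are linear in x', so the point count is a sum over x of a product
  of fibre sizes |{b. x t * b = c t}|, which is 1 when x t \<noteq> 0 and q or 0 otherwise. When a
  vertex y whose equation reads y * y' = 1 + \<beta> * z is summed out, either y \<noteq> 0 and z is
  unconstrained, or y = 0, which forces z = -1/\<beta>. This evaluates the point counts of paths of
  length at most four with arbitrary end coefficients. At the centre of E_m the three branches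
  decouple when x 0 \<noteq> 0, and for x 0 = 0 the centre's equation determines x 1 from x 2 and x 4.\<close>

definition fibre_card :: "'a::{finite,field} \<Rightarrow> 'a \<Rightarrow> int" where
  "fibre_card a c = int (card {b. a * b = c})"

lemma fibre_card_nonzero [simp]: "a \<noteq> 0 \<Longrightarrow> fibre_card a c = 1"
proof -
  assume "a \<noteq> 0"
  then have "{b. a * b = c} = {c / a}" by (auto simp: field_simps)
  then show ?thesis by (simp add: fibre_card_def)
qed

lemma fibre_card_zero: "fibre_card (0::'a::{finite,field}) c = (if c = 0 then int CARD('a) else 0)"
  by (simp add: fibre_card_def)

lemma fibre_card_one: "fibre_card a 1 = (if a = 0 then 0 else 1)"
  by (simp add: fibre_card_zero)

lemma card_tree_var_points:
  fixes \<alpha> :: "nat \<Rightarrow> 'a::{finite,field}"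
  assumes "finite V"
  shows "int (card (tree_var_points V adj \<alpha>)) =
    (\<Sum>x\<in>V \<rightarrow>\<^sub>E UNIV. \<Prod>t\<in>V. fibre_card (x t) (1 + \<alpha> t * (\<Prod>s\<in>{s\<in>V. adj s t}. x s)))"
proof -
  define fibre where "fibre x t = {b. x t * b = 1 + \<alpha> t * (\<Prod>s\<in>{s\<in>V. adj s t}. x s)}" for x t
  have "tree_var_points V adj \<alpha> = Sigma (V \<rightarrow>\<^sub>E UNIV) (\<lambda>x. \<Pi>\<^sub>E t\<in>V. fibre x t)"
    unfolding tree_var_points_def fibre_def by (auto simp: PiE_iff extensional_def)
  then have "card (tree_var_points V adj \<alpha>) = (\<Sum>x\<in>V \<rightarrow>\<^sub>E UNIV. \<Prod>t\<in>V. card (fibre x t))"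
    using assms by (simp add: card_SigmaI finite_PiE card_PiE)
  then show ?thesis by (simp add: fibre_card_def fibre_def)
qed

lemma sum_PiE_insert:
  fixes f :: "('i \<Rightarrow> 'a::finite) \<Rightarrow> 'b::comm_monoid_add"
  assumes "i \<notin> A"
  shows "(\<Sum>x\<in>insert i A \<rightarrow>\<^sub>E UNIV. f x) = (\<Sum>a\<in>UNIV. \<Sum>x\<in>A \<rightarrow>\<^sub>E UNIV. f (x(i := a)))"
proof -
  have "(\<Sum>x\<in>insert i A \<rightarrow>\<^sub>E UNIV. f x) = (\<Sum>(a, x)\<in>UNIV \<times> (A \<rightarrow>\<^sub>E UNIV). f (x(i := a)))"
    unfolding PiE_insert_eq
    by (subst sum.reindex) (use inj_combinator[OF assms, of "\<lambda>_. UNIV"] in \<open>auto simp: case_prod_beta\<close>)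
  then show ?thesis by (simp add: sum.cartesian_product)
qed

definition E_neighbours :: "nat \<Rightarrow> nat \<Rightarrow> nat set" where
  "E_neighbours m t =
     (if t = 0 then {1, 2, 4} else if t = 1 then {0} else if t = 2 then {0, 3}
      else if t = 3 then {2} else if t = 4 then {0, 5}
      else if t + 1 < m then {t - 1, t + 1} else {t - 1})"

lemma E_adj_neighbours:
  assumes "6 \<le> m" "t < m"
  shows "{s\<in>{0..<m}. E_adj m s t} = E_neighbours m t"
  using assms by (auto simp: E_adj_def E_edges_def E_neighbours_def)

lemma card_E_points:
  assumes "6 \<le> m"
  shows "int (card (E_points m \<alpha>)) =
    (\<Sum>x\<in>{0..<m} \<rightarrow>\<^sub>E UNIV. \<Prod>t\<in>{0..<m}. fibre_card (x t) (1 + \<alpha> t * (\<Prod>s\<in>E_neighbours m t. x s)))"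
  unfolding E_points_def card_tree_var_points[OF finite_atLeastLessThan]
  using E_adj_neighbours[OF assms] by (intro sum.cong prod.cong) auto

lemma card_nonzero_elements:
  "int (card (UNIV - {0::'a::{finite,field}})) = int CARD('a) - 1"
proof -
  have "0 < CARD('a)" by (simp add: finite_UNIV_card_ge_0)
  then show ?thesis by (simp add: card_Diff_singleton of_nat_diff)
qed

lemma sum_nonzero_const: "(\<Sum>y\<in>UNIV - {0::'a::{finite,field}}. k) = (int CARD('a) - 1) * k"
  by (simp add: card_nonzero_elements)

lemma sum_UNIV_remove_zero: "(\<Sum>y\<in>UNIV. f y) = f (0::'a::{finite,field}) + (\<Sum>y\<in>UNIV - {0}. f y)"
  by (simp add: sum.remove)

lemma sum_UNIV_if_zero: "(\<Sum>y\<in>UNIV. if y = 0 then 0 else f y) = (\<Sum>y\<in>UNIV - {0::'a::{finite,field}}. f y)"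
  by (simp add: sum_UNIV_remove_zero)

lemma affine_eq_zero_iff: "b \<noteq> 0 \<Longrightarrow> 1 + b * y = 0 \<longleftrightarrow> y = - 1 / (b::'a::field)"
  by (auto simp: field_simps add_eq_0_iff)

lemma sum_fibre_card:
  fixes c :: "'a::{finite,field}"
  defines "q \<equiv> int CARD('a)"
  shows "(\<Sum>y\<in>UNIV. fibre_card y c) = q - 1 + (if c = 0 then q else 0)"
  unfolding q_def by (subst sum_UNIV_remove_zero) (simp add: sum_nonzero_const fibre_card_zero)

lemma sum_fibre_card_leaf:
  fixes b :: "'a::{finite,field}"
  defines "q \<equiv> int CARD('a)"
  shows "(\<Sum>y\<in>UNIV. fibre_card y (1 + b)) = q - 1 + (if b = - 1 then q else 0)"
  unfolding q_def by (simp add: sum_fibre_card add_eq_0_iff)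

lemma sum_fibre_card_zero_affine:
  fixes \<beta> :: "'a::{finite,field}"
  defines "q \<equiv> int CARD('a)"
  shows "(\<Sum>z\<in>UNIV. fibre_card 0 (1 + \<beta> * z) * g z) = (if \<beta> = 0 then 0 else q * g (- 1 / \<beta>))"
proof (cases "\<beta> = 0")
  case False
  then have "(\<Sum>z\<in>UNIV. fibre_card 0 (1 + \<beta> * z) * g z) = (\<Sum>z\<in>UNIV. if z = - 1 / \<beta> then q * g z else 0)"
    unfolding q_def by (intro sum.cong) (auto simp: fibre_card_zero affine_eq_zero_iff)
  with False show ?thesis by simp
qed (simp add: fibre_card_zero)

lemma sum_peel_vertex:
  fixes \<beta> :: "'a::{finite,field}"
  defines "q \<equiv> int CARD('a)"
  shows "(\<Sum>y\<in>UNIV. \<Sum>z\<in>UNIV. fibre_card y (1 + \<beta> * z) * F y z) =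
    (\<Sum>y\<in>UNIV - {0}. \<Sum>z\<in>UNIV. F y z) + (if \<beta> = 0 then 0 else q * F 0 (- 1 / \<beta>))"
  unfolding q_def by (subst sum_UNIV_remove_zero) (simp add: sum_fibre_card_zero_affine add.commute)

lemma sum_leaf_weighted:
  fixes g :: "'a::{finite,field} \<Rightarrow> int"
  defines "q \<equiv> int CARD('a)"
  shows "(\<Sum>c\<in>UNIV - {0}. (\<Sum>y\<in>UNIV. fibre_card y (1 + c)) * g c) =
    (q - 1) * (\<Sum>c\<in>UNIV - {0}. g c) + q * g (- 1)"
proof -
  have "(\<Sum>c\<in>UNIV - {0}. (\<Sum>y\<in>UNIV. fibre_card y (1 + c)) * g c) =
      (\<Sum>c\<in>UNIV - {0}. (q - 1) * g c + (if c = - 1 then q * g c else 0))"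
    unfolding q_def by (intro sum.cong refl, simp only: sum_fibre_card_leaf) (auto simp: algebra_simps)
  then show ?thesis by (simp add: sum.distrib sum_distrib_left)
qed

lemma sum_nonzero_leaf:
  defines "q \<equiv> int CARD('a::{finite,field})"
  shows "(\<Sum>c\<in>UNIV - {0::'a}. \<Sum>y\<in>UNIV. fibre_card y (1 + c)) = q^2 - q + 1"
  using sum_leaf_weighted[where g = "\<lambda>_::'a. 1"]
  by (simp add: q_def sum_nonzero_const power2_eq_square algebra_simps)

text \<open>Point counts over a path y - z - w - ..., where the factor \<beta> in the first equation is the
  value of a neighbour outside the path and the last equation may carry a coefficient.\<close>

lemma path2_sum:
  fixes \<beta> \<gamma> :: "'a::{finite,field}"
  defines "q \<equiv> int CARD('a)"
  shows "(\<Sum>y\<in>UNIV. \<Sum>z\<in>UNIV. fibre_card y (1 + \<beta> * z) * fibre_card z (1 + \<gamma> * y)) =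
    (q - 1)^2 + (if \<beta> = 0 then 0 else q) + (if \<gamma> = 0 then 0 else q)"
proof -
  have "(\<Sum>y\<in>UNIV - {0}. \<Sum>z\<in>UNIV. fibre_card z (1 + \<gamma> * y)) = (q - 1)^2 + (if \<gamma> = 0 then 0 else q)"
  proof (cases "\<gamma> = 0")
    case False
    then have "(\<Sum>y\<in>UNIV - {0}. \<Sum>z\<in>UNIV. fibre_card z (1 + \<gamma> * y)) =
        (\<Sum>y\<in>UNIV - {0}. (q - 1) + (if y = - 1 / \<gamma> then q else 0))"
      unfolding q_def by (intro sum.cong) (auto simp: sum_fibre_card affine_eq_zero_iff)
    with False show ?thesis by (simp add: sum.distrib sum_nonzero_const q_def power2_eq_square)
  qed (simp add: sum_fibre_card sum_nonzero_const q_def power2_eq_square)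
  then show ?thesis
    by (simp add: sum_peel_vertex fibre_card_one q_def)
qed

lemma path3_sum:
  fixes \<alpha> \<beta> :: "'a::{finite,field}"
  defines "q \<equiv> int CARD('a)"
  assumes "\<alpha> \<noteq> 0"
  shows "(\<Sum>y\<in>UNIV. \<Sum>z\<in>UNIV. \<Sum>w\<in>UNIV.
      fibre_card y (1 + \<beta> * z) * fibre_card z (1 + y * w) * fibre_card w (1 + \<alpha> * z)) =
    (q - 1) * (q^2 + 1) + (if \<beta> = 0 then 0 else q * (q - 1) + (if \<alpha> = \<beta> then q^2 else 0))"
proof -
  have nonzero: "(\<Sum>y\<in>UNIV - {0}. \<Sum>z\<in>UNIV. \<Sum>w\<in>UNIV.
      fibre_card z (1 + y * w) * fibre_card w (1 + \<alpha> * z)) = (q - 1) * (q^2 + 1)"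
  proof -
    have "(\<Sum>z\<in>UNIV. \<Sum>w\<in>UNIV. fibre_card z (1 + y * w) * fibre_card w (1 + \<alpha> * z)) = q^2 + 1"
      if "y \<noteq> 0" for y
      using path2_sum[of y \<alpha>, folded q_def] that assms by (simp add: power2_eq_square algebra_simps)
    then show ?thesis by (simp add: sum_nonzero_const q_def)
  qed
  have "(\<Sum>y\<in>UNIV. \<Sum>z\<in>UNIV. \<Sum>w\<in>UNIV.
      fibre_card y (1 + \<beta> * z) * fibre_card z (1 + y * w) * fibre_card w (1 + \<alpha> * z)) =
    (\<Sum>y\<in>UNIV. \<Sum>z\<in>UNIV. fibre_card y (1 + \<beta> * z) *
      (\<Sum>w\<in>UNIV. fibre_card z (1 + y * w) * fibre_card w (1 + \<alpha> * z)))"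
    by (simp add: sum_distrib_left mult.assoc)
  also have "\<dots> = (q - 1) * (q^2 + 1) +
      (if \<beta> = 0 then 0 else q * (\<Sum>w\<in>UNIV. fibre_card w (1 + \<alpha> * (- 1 / \<beta>))))"
    by (subst sum_peel_vertex) (simp add: nonzero fibre_card_one flip: q_def)
  also have "\<dots> = (q - 1) * (q^2 + 1) + (if \<beta> = 0 then 0 else q * (q - 1) + (if \<alpha> = \<beta> then q^2 else 0))"
  proof (cases "\<beta> = 0")
    case False
    have "(\<Sum>w\<in>UNIV. fibre_card w (1 + \<alpha> * (- 1 / \<beta>))) = q - 1 + (if \<alpha> = \<beta> then q else 0)"
      using False by (simp add: sum_fibre_card q_def field_simps)
    with False show ?thesis by (simp only:) (simp add: power2_eq_square algebra_simps)
  qed simp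
  finally show ?thesis .
qed

lemma path4_sum:
  fixes \<beta> :: "'a::{finite,field}"
  defines "q \<equiv> int CARD('a)"
  assumes "\<beta> \<noteq> 0"
  shows "(\<Sum>y\<in>UNIV. \<Sum>z\<in>UNIV. \<Sum>w\<in>UNIV. \<Sum>v\<in>UNIV. fibre_card y (1 + \<beta> * z) *
      fibre_card z (1 + y * w) * fibre_card w (1 + z * v) * fibre_card v (1 + w)) = q^4 + q^2 + 1"
proof -
  have nonzero: "(\<Sum>y\<in>UNIV - {0::'a}. \<Sum>z\<in>UNIV. \<Sum>w\<in>UNIV. \<Sum>v\<in>UNIV.
      fibre_card z (1 + y * w) * fibre_card w (1 + z * v) * fibre_card v (1 + w)) =
    (q - 1) * ((q - 1) * (q^2 + 1) + q * (q - 1)) + q^2"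
  proof -
    have inner: "(\<Sum>z\<in>UNIV. \<Sum>w\<in>UNIV. \<Sum>v\<in>UNIV.
        fibre_card z (1 + y * w) * fibre_card w (1 + z * v) * fibre_card v (1 + w)) =
      (q - 1) * (q^2 + 1) + q * (q - 1) + (if y = 1 then q^2 else 0)" if "y \<noteq> 0" for y :: 'a
      using path3_sum[of 1 y] that by (simp add: q_def)
    have "(\<Sum>y\<in>UNIV - {0::'a}. \<Sum>z\<in>UNIV. \<Sum>w\<in>UNIV. \<Sum>v\<in>UNIV.
        fibre_card z (1 + y * w) * fibre_card w (1 + z * v) * fibre_card v (1 + w)) =
      (\<Sum>y\<in>UNIV - {0::'a}. (q - 1) * (q^2 + 1) + q * (q - 1) + (if y = 1 then q^2 else 0))"
      by (rule sum.cong) (simp_all add: inner)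
    then show ?thesis by (simp add: sum.distrib sum_nonzero_const q_def)
  qed
  have zero: "(\<Sum>w\<in>UNIV. \<Sum>v\<in>UNIV. fibre_card w (1 + (- 1 / \<beta>) * v) * fibre_card v (1 + w)) = q^2 + 1"
    using path2_sum[of "- 1 / \<beta>" 1, folded q_def] assms by (simp add: power2_eq_square algebra_simps)
  have "(\<Sum>y\<in>UNIV. \<Sum>z\<in>UNIV. \<Sum>w\<in>UNIV. \<Sum>v\<in>UNIV. fibre_card y (1 + \<beta> * z) *
      fibre_card z (1 + y * w) * fibre_card w (1 + z * v) * fibre_card v (1 + w)) =
    (\<Sum>y\<in>UNIV. \<Sum>z\<in>UNIV. fibre_card y (1 + \<beta> * z) * (\<Sum>w\<in>UNIV. \<Sum>v\<in>UNIV.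
      fibre_card z (1 + y * w) * fibre_card w (1 + z * v) * fibre_card v (1 + w)))"
    by (simp add: sum_distrib_left mult.assoc)
  also have "\<dots> = (q - 1) * ((q - 1) * (q^2 + 1) + q * (q - 1)) + q^2 + q * (q^2 + 1)"
    using assms by (subst sum_peel_vertex) (use zero in \<open>simp add: nonzero fibre_card_one flip: q_def\<close>)
  also have "\<dots> = q^4 + q^2 + 1"
    by algebra
  finally show ?thesis .
qed

text \<open>The centre value is 0 here, so the centre's equation reads a1 * a2 * a4 = -1; the vertex 1
  of the short branch is summed innermost, where this equation determines it.\<close>

lemma sum_centre_zero:
  fixes L :: "'a::{finite,field} \<Rightarrow> int"
  defines "q \<equiv> int CARD('a)"
  shows "(\<Sum>a2\<in>UNIV. \<Sum>a3\<in>UNIV. \<Sum>a4\<in>UNIV. \<Sum>a1\<in>UNIV.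
      fibre_card 0 (1 + a1 * a2 * a4) * fibre_card a1 1 * fibre_card a2 1 * fibre_card a3 (1 + a2) * L a4) =
    q * (q^2 - q + 1) * (\<Sum>a4\<in>UNIV - {0}. L a4)"
proof -
  have short_branch: "(\<Sum>a1\<in>UNIV. fibre_card 0 (1 + a1 * b) * fibre_card a1 1) = (if b = 0 then 0 else q)"
    for b :: 'a
    using sum_fibre_card_zero_affine[of b "\<lambda>a1. fibre_card a1 1"]
    by (simp add: fibre_card_one mult.commute q_def)
  have factor: "(\<Sum>a3\<in>UNIV. \<Sum>a4\<in>UNIV. fibre_card a2 1 * fibre_card a3 (1 + a2) * L a4 *
      (if a2 * a4 = 0 then 0 else q)) =
    (if a2 = 0 then 0 else q * (\<Sum>a3\<in>UNIV. fibre_card a3 (1 + a2))) * (\<Sum>a4\<in>UNIV. if a4 = 0 then 0 else L a4)"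
    for a2 :: 'a
  proof (cases "a2 = 0")
    case False
    then have "(\<Sum>a3\<in>UNIV. \<Sum>a4\<in>UNIV. fibre_card a2 1 * fibre_card a3 (1 + a2) * L a4 *
        (if a2 * a4 = 0 then 0 else q)) =
      (\<Sum>a3\<in>UNIV. \<Sum>a4\<in>UNIV. q * fibre_card a3 (1 + a2) * (if a4 = 0 then 0 else L a4))"
      by (intro sum.cong refl) auto
    also have "\<dots> = q * (\<Sum>a3\<in>UNIV. fibre_card a3 (1 + a2)) * (\<Sum>a4\<in>UNIV. if a4 = 0 then 0 else L a4)"
      by (simp only: mult.assoc sum_product sum_distrib_left[of q])
    finally show ?thesis using False by simp
  qed (simp add: fibre_card_one)
  have "(\<Sum>a2\<in>UNIV. \<Sum>a3\<in>UNIV. \<Sum>a4\<in>UNIV. \<Sum>a1\<in>UNIV.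
      fibre_card 0 (1 + a1 * a2 * a4) * fibre_card a1 1 * fibre_card a2 1 * fibre_card a3 (1 + a2) * L a4) =
    (\<Sum>a2\<in>UNIV. \<Sum>a3\<in>UNIV. \<Sum>a4\<in>UNIV. fibre_card a2 1 * fibre_card a3 (1 + a2) * L a4 *
      (\<Sum>a1\<in>UNIV. fibre_card 0 (1 + a1 * (a2 * a4)) * fibre_card a1 1))"
    by (simp add: sum_distrib_left mult_ac)
  also have "\<dots> = (\<Sum>a2\<in>UNIV. if a2 = (0::'a) then 0 else q * (\<Sum>a3\<in>UNIV. fibre_card a3 (1 + a2))) *
      (\<Sum>a4\<in>UNIV. if a4 = 0 then 0 else L a4)"
    using factor by (simp add: short_branch sum_distrib_right)
  also have "\<dots> = q * (\<Sum>a2\<in>UNIV - {0::'a}. \<Sum>a3\<in>UNIV. fibre_card a3 (1 + a2)) * (\<Sum>a4\<in>UNIV - {0}. L a4)"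
    by (simp add: sum_UNIV_if_zero sum_distrib_left)
  finally show ?thesis
    unfolding q_def sum_nonzero_leaf .
qed

lemma centre_sum:
  fixes K :: "'a::{finite,field} \<Rightarrow> 'a \<Rightarrow> int"
  defines "q \<equiv> int CARD('a)"
  shows "(\<Sum>a0\<in>UNIV. \<Sum>a2\<in>UNIV. \<Sum>a3\<in>UNIV. \<Sum>a4\<in>UNIV. \<Sum>a1\<in>UNIV.
      fibre_card a0 (1 + a1 * a2 * a4) * fibre_card a1 (1 + a0) *
      fibre_card a2 (1 + a0 * a3) * fibre_card a3 (1 + a2) * K a0 a4) =
    (q^2 + 1) * (\<Sum>c\<in>UNIV - {0}. (\<Sum>y\<in>UNIV. fibre_card y (1 + c)) * (\<Sum>a4\<in>UNIV. K c a4)) +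
    q * (q^2 - q + 1) * (\<Sum>a4\<in>UNIV - {0}. K 0 a4)"
proof -
  define X where "X a0 = (\<Sum>a2\<in>UNIV. \<Sum>a3\<in>UNIV. \<Sum>a4\<in>UNIV. \<Sum>a1\<in>UNIV.
      fibre_card a0 (1 + a1 * a2 * a4) * fibre_card a1 (1 + a0) *
      fibre_card a2 (1 + a0 * a3) * fibre_card a3 (1 + a2) * K a0 a4)" for a0
  have nonzero: "X c = (q^2 + 1) * ((\<Sum>y\<in>UNIV. fibre_card y (1 + c)) * (\<Sum>a4\<in>UNIV. K c a4))"
    if "c \<noteq> 0" for c
  proof -
    have "X c = (\<Sum>a2\<in>UNIV. \<Sum>a3\<in>UNIV. fibre_card a2 (1 + c * a3) * fibre_card a3 (1 + 1 * a2)) *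
        (\<Sum>a4\<in>UNIV. K c a4) * (\<Sum>y\<in>UNIV. fibre_card y (1 + c))"
      unfolding X_def using that by (simp add: sum_distrib_left sum_distrib_right mult_ac)
    moreover have "(\<Sum>a2\<in>UNIV. \<Sum>a3\<in>UNIV. fibre_card a2 (1 + c * a3) * fibre_card a3 (1 + 1 * a2)) = q^2 + 1"
      using path2_sum[of c 1] that unfolding q_def by (simp add: power2_eq_square algebra_simps)
    ultimately show ?thesis by (simp add: mult_ac)
  qed
  have zero: "X 0 = q * (q^2 - q + 1) * (\<Sum>a4\<in>UNIV - {0}. K 0 a4)"
    using sum_centre_zero[of "K 0"] unfolding X_def q_def by simp
  have "(\<Sum>c\<in>UNIV - {0}. X c) =
      (\<Sum>c\<in>UNIV - {0}. (q^2 + 1) * ((\<Sum>y\<in>UNIV. fibre_card y (1 + c)) * (\<Sum>a4\<in>UNIV. K c a4)))"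
    by (rule sum.cong) (simp_all add: nonzero)
  then have "(\<Sum>c\<in>UNIV - {0}. X c) =
      (q^2 + 1) * (\<Sum>c\<in>UNIV - {0}. (\<Sum>y\<in>UNIV. fibre_card y (1 + c)) * (\<Sum>a4\<in>UNIV. K c a4))"
    by (simp only: sum_distrib_left)
  moreover have "(\<Sum>a0\<in>UNIV. X a0) = X 0 + (\<Sum>c\<in>UNIV - {0}. X c)"
    by (rule sum_UNIV_remove_zero)
  ultimately show ?thesis
    unfolding zero by (simp add: X_def)
qed

lemma card_E6_points:
  defines "q \<equiv> int CARD('a::{finite,field})"
  shows "int (card (E_points 6 (\<lambda>_. 1 :: 'a))) = q^6 + q^4 + q^3 + q^2 + 1"
proof -
  define K where "K c a4 = (\<Sum>a5\<in>UNIV. fibre_card a4 (1 + c * a5) * fibre_card a5 (1 + a4))"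
    for c a4 :: 'a
  have "{0..<6::nat} = {0, 2, 3, 4, 1, 5}" by auto
  then have "int (card (E_points 6 (\<lambda>_. 1 :: 'a))) =
    (\<Sum>a0\<in>UNIV. \<Sum>a2\<in>UNIV. \<Sum>a3\<in>UNIV. \<Sum>a4\<in>UNIV. \<Sum>a1\<in>UNIV.
      fibre_card a0 (1 + a1 * a2 * a4) * fibre_card a1 (1 + a0) *
      fibre_card a2 (1 + a0 * a3) * fibre_card a3 (1 + a2) * K a0 a4)"
    by (simp add: card_E_points E_neighbours_def sum_PiE_insert PiE_empty_domain K_def
        sum_distrib_left mult_ac)
  also have "\<dots> = (q^2 + 1) * (\<Sum>c\<in>UNIV - {0}. (\<Sum>y\<in>UNIV. fibre_card y (1 + c)) * (\<Sum>a4\<in>UNIV. K c a4)) +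
    q * (q^2 - q + 1) * (\<Sum>a4\<in>UNIV - {0}. K 0 a4)"
    unfolding q_def by (rule centre_sum)
  also have "\<dots> = (q^2 + 1) * ((q - 1) * ((q - 1) * (q^2 + 1)) + q * (q^2 + 1)) +
    q * (q^2 - q + 1) * (q^2 - q + 1)"
  proof -
    have "(\<Sum>a4\<in>UNIV. K c a4) = q^2 + 1" if "c \<noteq> 0" for c
      using path2_sum[of c 1] that unfolding K_def q_def by (simp add: power2_eq_square algebra_simps)
    moreover have "(\<Sum>a4\<in>UNIV - {0}. K 0 a4) = q^2 - q + 1"
      unfolding K_def using sum_nonzero_leaf by (simp add: q_def)
    ultimately show ?thesis
      by (simp add: sum_leaf_weighted sum_nonzero_const flip: q_def)
  qed
  also have "\<dots> = q^6 + q^4 + q^3 + q^2 + 1"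
    by algebra
  finally show ?thesis .
qed

lemma card_E7_points:
  fixes \<alpha> :: "'a::{finite,field}"
  defines "q \<equiv> int CARD('a)"
  assumes "\<alpha> \<noteq> 0"
  shows "int (card (E_points 7 ((\<lambda>_. 1)(6 := \<alpha>)))) =
    q^7 + q^5 - q^2 - 1 + (if \<alpha> = - 1 then q^5 + q^3 else 0)"
proof -
  define K where "K c a4 = (\<Sum>a5\<in>UNIV. \<Sum>a6\<in>UNIV.
      fibre_card a4 (1 + c * a5) * fibre_card a5 (1 + a4 * a6) * fibre_card a6 (1 + \<alpha> * a5))"
    for c a4 :: 'a
  define A where "A = (q - 1) * (q^2 + 1) + q * (q - 1)"
  have "{0..<7::nat} = {0, 2, 3, 4, 1, 5, 6}" by auto
  then have "int (card (E_points 7 ((\<lambda>_. 1)(6 := \<alpha>)))) =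
    (\<Sum>a0\<in>UNIV. \<Sum>a2\<in>UNIV. \<Sum>a3\<in>UNIV. \<Sum>a4\<in>UNIV. \<Sum>a1\<in>UNIV.
      fibre_card a0 (1 + a1 * a2 * a4) * fibre_card a1 (1 + a0) *
      fibre_card a2 (1 + a0 * a3) * fibre_card a3 (1 + a2) * K a0 a4)"
    by (simp add: card_E_points E_neighbours_def sum_PiE_insert PiE_empty_domain K_def
        sum_distrib_left mult_ac)
  also have "\<dots> = (q^2 + 1) * (\<Sum>c\<in>UNIV - {0}. (\<Sum>y\<in>UNIV. fibre_card y (1 + c)) * (\<Sum>a4\<in>UNIV. K c a4)) +
    q * (q^2 - q + 1) * (\<Sum>a4\<in>UNIV - {0}. K 0 a4)"
    unfolding q_def by (rule centre_sum)
  also have "\<dots> = (q^2 + 1) * ((q - 1) * ((q - 1) * A + q^2) + q * A + (if \<alpha> = - 1 then q^3 else 0)) +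
    q * (q^2 - q + 1) * ((q - 1) * (q^2 + 1))"
  proof -
    have "(\<Sum>a4\<in>UNIV. K c a4) = A + (if c = \<alpha> then q^2 else 0)" if "c \<noteq> 0" for c
      using path3_sum[of \<alpha> c] that assms unfolding K_def A_def q_def by auto
    then have "(\<Sum>c\<in>UNIV - {0}. (\<Sum>y\<in>UNIV. fibre_card y (1 + c)) * (\<Sum>a4\<in>UNIV. K c a4)) =
        (\<Sum>c\<in>UNIV - {0}. (\<Sum>y\<in>UNIV. fibre_card y (1 + c)) * (A + (if c = \<alpha> then q^2 else 0)))"
      by (intro sum.cong) auto
    also have "\<dots> = (q - 1) * ((q - 1) * A + q^2) + q * A + (if \<alpha> = - 1 then q^3 else 0)"
      unfolding sum_leaf_weighted q_def[symmetric] using assms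
      by (simp add: sum.distrib sum_nonzero_const q_def power3_eq_cube power2_eq_square algebra_simps)
    finally have nonzero: "(\<Sum>c\<in>UNIV - {0}. (\<Sum>y\<in>UNIV. fibre_card y (1 + c)) * (\<Sum>a4\<in>UNIV. K c a4)) =
        (q - 1) * ((q - 1) * A + q^2) + q * A + (if \<alpha> = - 1 then q^3 else 0)" .
    have "(\<Sum>a4\<in>UNIV - {0}. K 0 a4) = (q - 1) * (q^2 + 1)"
    proof -
      have "K 0 a4 = q^2 + 1" if "a4 \<noteq> 0" for a4
        using path2_sum[of a4 \<alpha>] that assms unfolding K_def q_def
        by (simp add: power2_eq_square algebra_simps)
      then show ?thesis by (simp add: sum_nonzero_const q_def)
    qed
    with nonzero show ?thesis by simp
  qed
  also have "\<dots> = q^7 + q^5 - q^2 - 1 + (if \<alpha> = - 1 then q^5 + q^3 else 0)"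
    unfolding A_def by (simp add: algebra_simps power2_eq_square eval_nat_numeral)
  finally show ?thesis .
qed

lemma card_E8_points:
  defines "q \<equiv> int CARD('a::{finite,field})"
  shows "int (card (E_points 8 (\<lambda>_. 1 :: 'a))) = q^8 + q^6 + q^5 + q^4 + q^3 + q^2 + 1"
proof -
  define K where "K c a4 = (\<Sum>a5\<in>UNIV. \<Sum>a6\<in>UNIV. \<Sum>a7\<in>UNIV. fibre_card a4 (1 + c * a5) *
      fibre_card a5 (1 + a4 * a6) * fibre_card a6 (1 + a5 * a7) * fibre_card a7 (1 + a6))"
    for c a4 :: 'a
  define A where "A = (q - 1) * (q^2 + 1) + q * (q - 1)"
  have "{0..<8::nat} = {0, 2, 3, 4, 1, 5, 6, 7}" by auto
  then have "int (card (E_points 8 (\<lambda>_. 1 :: 'a))) =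
    (\<Sum>a0\<in>UNIV. \<Sum>a2\<in>UNIV. \<Sum>a3\<in>UNIV. \<Sum>a4\<in>UNIV. \<Sum>a1\<in>UNIV.
      fibre_card a0 (1 + a1 * a2 * a4) * fibre_card a1 (1 + a0) *
      fibre_card a2 (1 + a0 * a3) * fibre_card a3 (1 + a2) * K a0 a4)"
    by (simp add: card_E_points E_neighbours_def sum_PiE_insert PiE_empty_domain K_def
        sum_distrib_left mult_ac)
  also have "\<dots> = (q^2 + 1) * (\<Sum>c\<in>UNIV - {0}. (\<Sum>y\<in>UNIV. fibre_card y (1 + c)) * (\<Sum>a4\<in>UNIV. K c a4)) +
    q * (q^2 - q + 1) * (\<Sum>a4\<in>UNIV - {0}. K 0 a4)"
    unfolding q_def by (rule centre_sum)
  also have "\<dots> = (q^2 + 1) * ((q - 1) * ((q - 1) * (q^4 + q^2 + 1)) + q * (q^4 + q^2 + 1)) +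
    q * (q^2 - q + 1) * ((q - 1) * A + q^2)"
  proof -
    have "(\<Sum>a4\<in>UNIV. K c a4) = q^4 + q^2 + 1" if "c \<noteq> 0" for c
      using path4_sum[of c] that unfolding K_def q_def by simp
    moreover have "(\<Sum>a4\<in>UNIV - {0}. K 0 a4) = (q - 1) * A + q^2"
    proof -
      have K0: "K 0 a4 = A + (if a4 = 1 then q^2 else 0)" if "a4 \<noteq> 0" for a4
        using path3_sum[of 1 a4] that unfolding K_def A_def q_def by simp
      have "(\<Sum>a4\<in>UNIV - {0}. K 0 a4) = (\<Sum>a4\<in>UNIV - {0::'a}. A + (if a4 = 1 then q^2 else 0))"
        by (rule sum.cong) (simp_all add: K0)
      then show ?thesis by (simp add: sum.distrib sum_nonzero_const q_def)
    qed
    ultimately show ?thesis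
      by (simp add: sum_leaf_weighted sum_nonzero_const flip: q_def)
  qed
  also have "\<dots> = q^8 + q^6 + q^5 + q^4 + q^3 + q^2 + 1"
    unfolding A_def by algebra
  finally show ?thesis .
qed

theorem mainTheorem18:
  fixes q :: int
  assumes "q = int (card (UNIV :: 'a::{finite, field} set))"
  shows "int (card (E_points 6 (\<lambda>_. 1 :: 'a))) = q^6 + q^4 + q^3 + q^2 + 1
    \<and> (\<forall>\<alpha> :: 'a. \<alpha> \<noteq> 0 \<longrightarrow> \<alpha> \<noteq> -1 \<longrightarrow>
           int (card (E_points 7 ((\<lambda>_. 1)(6 := \<alpha>)))) = q^7 + q^5 - q^2 - 1)
    \<and> int (card (E_points 7 ((\<lambda>_. 1)(6 := -1 :: 'a)))) = q^7 + 2*q^5 + q^3 - q^2 - 1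
    \<and> int (card (E_points 8 (\<lambda>_. 1 :: 'a))) = q^8 + q^6 + q^5 + q^4 + q^3 + q^2 + 1"
proof (intro conjI allI impI)
  show "int (card (E_points 6 (\<lambda>_. 1 :: 'a))) = q^6 + q^4 + q^3 + q^2 + 1"
    using card_E6_points assms by simp
  show "int (card (E_points 8 (\<lambda>_. 1 :: 'a))) = q^8 + q^6 + q^5 + q^4 + q^3 + q^2 + 1"
    using card_E8_points assms by simp
  show "int (card (E_points 7 ((\<lambda>_. 1)(6 := \<alpha>)))) = q^7 + q^5 - q^2 - 1"
    if "\<alpha> \<noteq> 0" "\<alpha> \<noteq> -1" for \<alpha> :: 'a
    using card_E7_points[OF that(1)] that(2) assms by simp
  show "int (card (E_points 7 ((\<lambda>_. 1)(6 := -1 :: 'a)))) = q^7 + 2*q^5 + q^3 - q^2 - 1"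
    using card_E7_points[of "-1 :: 'a"] assms by simp
qed

end
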